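(* Let $G=(A\cup B,E)$ be a balanced bipartite graph with $|A|=|B|=n/2$. Suppose there exist $r,\varphi>0$ and $\beta_1,\beta_2,\beta_3,\gamma\in(0,1)$ such that: (P1) $\deg_G(v)\ge r(1-\beta_1)$ for all $v\in A\cup B$; (P2) $e_G(X,Y)<r\beta_2|X|$ for all $X\subseteq A$, $Y\subseteq B$ with $|X|=|Y|\le r/\varphi$; (P3) $e_G(X,Y)\ge 2r(1-\beta_3)|X||Y|/n$ for all $X\subseteq A$, $Y\subseteq B$ with $|X|+|Y|>n/2$ and $\min\{|X|,|Y|\}>r/\varphi$; (P4) $\gamma\ge\max\{\beta_3,\beta_1+\beta_2\}$. Then $G$ contains an $\lfloor r(1-\gamma)\rfloor$-factor.
   Context: For $X\subseteq A$, $Y\subseteq B$, $e_G(X,Y)$ is the number of edges of $G$ with one endpoint in $X$ and the other in $Y$. An $s$-factor of a graph is a spanning $s$-regular subgraph. *)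

theory Defs
  imports Complex_Main
begin

definition bipartite_graph :: "'a set \<Rightarrow> 'a set \<Rightarrow> ('a \<Rightarrow> 'a \<Rightarrow> bool) \<Rightarrow> bool" where
  "bipartite_graph A B E \<longleftrightarrow> finite A \<and> finite B \<and> A \<inter> B = {} \<and>
     (\<forall>x y. E x y \<longrightarrow> E y x) \<and>
     (\<forall>x y. E x y \<longrightarrow> (x \<in> A \<and> y \<in> B) \<or> (x \<in> B \<and> y \<in> A))"

definition degree :: "('a \<Rightarrow> 'a \<Rightarrow> bool) \<Rightarrow> 'a \<Rightarrow> nat" where
  "degree E v = card {u. E v u}"

definition e_G :: "('a \<Rightarrow> 'a \<Rightarrow> bool) \<Rightarrow> 'a set \<Rightarrow> 'a set \<Rightarrow> nat" where
  "e_G E X Y = card {(x, y). x \<in> X \<and> y \<in> Y \<and> E x y}"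

definition has_factor :: "'a set \<Rightarrow> ('a \<Rightarrow> 'a \<Rightarrow> bool) \<Rightarrow> nat \<Rightarrow> bool" where
  "has_factor V E s \<longleftrightarrow> (\<exists>F. (\<forall>x y. F x y \<longrightarrow> E x y) \<and> (\<forall>x y. F x y \<longrightarrow> F y x) \<and>
      (\<forall>v\<in>V. degree F v = s))"

end

theory Submission
  imports Defs
begin

text \<open>
  A balanced bipartite graph with parts \<open>A\<close>, \<open>B\<close> has an \<open>s\<close>-factor as soon as
  \<open>s |X| \<le> e(X, Y) + s (|B| - |Y|)\<close> for all \<open>X \<subseteq> A\<close>, \<open>Y \<subseteq> B\<close>: take a subgraph of maximum size
  with all degrees at most \<open>s\<close>; if some vertex \<open>a\<^sub>0 \<in> A\<close> is deficient, either an alternating path from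
  \<open>a\<^sub>0\<close> ends at a deficient vertex of \<open>B\<close> and the subgraph can be enlarged, or the set \<open>X\<close> of
  vertices reachable from \<open>a\<^sub>0\<close>, together with the set \<open>Y\<close> of vertices of \<open>B\<close> joined to no vertex
  of \<open>X\<close> by an edge outside the subgraph, violates the inequality.

  For \<open>s = \<lfloor>r(1 - \<gamma>)\<rfloor>\<close> the inequality is trivial when \<open>|X| + |Y| \<le> n/2\<close>. If both \<open>|X|\<close> and
  \<open>|Y|\<close> exceed \<open>r/\<phi>\<close>, (P3) gives \<open>e(X, Y) \<ge> r(1 - \<beta>\<^sub>3) |X| |Y| / |B|\<close>, which suffices since
  \<open>|B| (|X| + |Y| - |B|) \<le> |X| |Y|\<close>. If, say, \<open>|X| \<le> r/\<phi>\<close>, then \<open>B - Y\<close> lies in a set \<open>Y'\<close> with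
  \<open>|Y'| = |X|\<close>, and (P1), (P2) give \<open>e(X, Y) \<ge> e(X, B) - e(X, Y') \<ge> r(1 - \<beta>\<^sub>1 - \<beta>\<^sub>2) |X| \<ge> s |X|\<close>.
\<close>

section \<open>Edge counts\<close>

lemma e_G_eq_sum_left:
  assumes "finite X" "finite Y"
  shows "e_G E X Y = (\<Sum>x\<in>X. card {y\<in>Y. E x y})"
proof -
  have "{(x, y). x \<in> X \<and> y \<in> Y \<and> E x y} = Sigma X (\<lambda>x. {y\<in>Y. E x y})" by auto
  then show ?thesis unfolding e_G_def using assms by simp
qed

lemma e_G_commute:
  assumes "\<forall>x y. E x y \<longrightarrow> E y x"
  shows "e_G E Y X = e_G E X Y"
proof -
  have "(\<lambda>(x, y). (y, x)) ` {(x, y). x \<in> X \<and> y \<in> Y \<and> E x y} = {(y, x). y \<in> Y \<and> x \<in> X \<and> E y x}"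
    using assms by force
  moreover have "card ((\<lambda>(x, y). (y, x)) ` {(x, y). x \<in> X \<and> y \<in> Y \<and> E x y}) = e_G E X Y"
    unfolding e_G_def by (rule card_image[OF swap_inj_on])
  ultimately show ?thesis unfolding e_G_def by simp
qed

lemma e_G_Un_right:
  assumes "finite X" "finite Y1" "finite Y2" "Y1 \<inter> Y2 = {}"
  shows "e_G E X (Y1 \<union> Y2) = e_G E X Y1 + e_G E X Y2"
proof -
  have "card {y\<in>Y1 \<union> Y2. E x y} = card {y\<in>Y1. E x y} + card {y\<in>Y2. E x y}" for x
    using assms by (subst card_Un_disjoint[symmetric]) (auto intro: arg_cong[where f = card])
  then show ?thesis using assms by (simp add: e_G_eq_sum_left sum.distrib)
qed

lemma e_G_mono_right:
  assumes "finite X" "finite Y'" "Y \<subseteq> Y'"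
  shows "e_G E X Y \<le> e_G E X Y'"
  unfolding e_G_def
  by (rule card_mono[OF finite_subset[of _ "X \<times> Y'"]]) (use assms in auto)

lemma card_Int_Times_eq_sum_left:
  assumes "finite X" "finite Y"
  shows "card (M \<inter> X \<times> Y) = (\<Sum>x\<in>X. card {y\<in>Y. (x, y) \<in> M})"
proof -
  have "M \<inter> X \<times> Y = Sigma X (\<lambda>x. {y\<in>Y. (x, y) \<in> M})" by auto
  then show ?thesis using assms by simp
qed

lemma card_Int_Times_eq_sum_right:
  assumes "finite X" "finite Y"
  shows "card (M \<inter> X \<times> Y) = (\<Sum>y\<in>Y. card {x\<in>X. (x, y) \<in> M})"
proof -
  have "(\<lambda>(x, y). (y, x)) ` (M \<inter> X \<times> Y) = Sigma Y (\<lambda>y. {x\<in>X. (x, y) \<in> M})" by force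
  moreover have "card ((\<lambda>(x, y). (y, x)) ` (M \<inter> X \<times> Y)) = card (M \<inter> X \<times> Y)"
    by (rule card_image[OF swap_inj_on])
  ultimately show ?thesis using assms by simp
qed

lemma bipartite_graph_swap: "bipartite_graph A B E \<Longrightarrow> bipartite_graph B A E"
  unfolding bipartite_graph_def by blast

lemma degree_bipartite:
  assumes "bipartite_graph A B E" "a \<in> A"
  shows "degree E a = card {b\<in>B. E a b}"
proof -
  have "{u. E a u} = {b\<in>B. E a b}" using assms unfolding bipartite_graph_def by blast
  then show ?thesis unfolding degree_def by simp
qed

lemma e_G_ge_min_degree:
  assumes G: "bipartite_graph A B E" and X: "X \<subseteq> A" and deg: "\<forall>v\<in>X. d \<le> real (degree E v)"
  shows "d * real (card X) \<le> real (e_G E X B)"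
proof -
  have fin: "finite X" "finite B" using G X finite_subset unfolding bipartite_graph_def by blast+
  have "d * real (card X) = (\<Sum>x\<in>X. d)" by simp
  also have "\<dots> \<le> (\<Sum>x\<in>X. real (degree E x))" using deg by (intro sum_mono) auto
  also have "\<dots> = real (e_G E X B)"
    using e_G_eq_sum_left[OF fin] degree_bipartite[OF G] X by (auto simp: subset_iff)
  finally show ?thesis .
qed

lemma exists_subset_between:
  assumes "finite T" "S \<subseteq> T" "card S \<le> k" "k \<le> card T"
  obtains S' where "S \<subseteq> S'" "S' \<subseteq> T" "card S' = k"
proof -
  have fS: "finite S" by (rule finite_subset[OF assms(2,1)])
  have "k - card S \<le> card (T - S)" using assms fS by (simp add: card_Diff_subset)
  then obtain U where U: "U \<subseteq> T - S" "card U = k - card S" "finite U"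
    by (rule obtain_subset_with_card_n)
  have "card (S \<union> U) = card S + card U" using U fS by (intro card_Un_disjoint) auto
  with U assms show ?thesis by (intro that[of "S \<union> U"]) auto
qed

section \<open>A factor criterion for balanced bipartite graphs\<close>

definition bmatching :: "'a set \<Rightarrow> 'a set \<Rightarrow> ('a \<Rightarrow> 'a \<Rightarrow> bool) \<Rightarrow> nat \<Rightarrow> ('a \<times> 'a) set \<Rightarrow> bool" where
  "bmatching A B E s M \<longleftrightarrow> M \<subseteq> {(a, b). a \<in> A \<and> b \<in> B \<and> E a b} \<and>
     (\<forall>a\<in>A. card {b. (a, b) \<in> M} \<le> s) \<and> (\<forall>b\<in>B. card {a. (a, b) \<in> M} \<le> s)"

lemma bmatching_finite:
  assumes "bmatching A B E s M" "finite A" "finite B"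
  shows "finite M" "finite {b. (a, b) \<in> M}" "finite {a. (a, b) \<in> M}"
proof -
  have "M \<subseteq> A \<times> B" using assms(1) unfolding bmatching_def by auto
  then show "finite M" "finite {b. (a, b) \<in> M}" "finite {a. (a, b) \<in> M}"
    using assms(2,3) by (auto intro: finite_subset)
qed

lemma bmatching_insert:
  assumes M: "bmatching A B E s M" and fin: "finite A" "finite B"
    and ab: "a \<in> A" "b \<in> B" "E a b" "(a, b) \<notin> M"
    and deficient: "card {y. (a, y) \<in> M} < s" "card {x. (x, b) \<in> M} < s"
  shows "bmatching A B E s (insert (a, b) M)" "card M < card (insert (a, b) M)"
proof -
  have "card {y. (x, y) \<in> insert (a, b) M} \<le> s" if "x \<in> A" for x
  proof (cases "x = a")
    case True
    then have "{y. (x, y) \<in> insert (a, b) M} = insert b {y. (a, y) \<in> M}" by auto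
    then show ?thesis using deficient(1) bmatching_finite[OF M fin] by (simp add: card_insert_if)
  next
    case False
    then have "{y. (x, y) \<in> insert (a, b) M} = {y. (x, y) \<in> M}" by auto
    then show ?thesis using M that unfolding bmatching_def by auto
  qed
  moreover have "card {x. (x, y) \<in> insert (a, b) M} \<le> s" if "y \<in> B" for y
  proof (cases "y = b")
    case True
    then have "{x. (x, y) \<in> insert (a, b) M} = insert a {x. (x, b) \<in> M}" by auto
    then show ?thesis using deficient(2) bmatching_finite[OF M fin] by (simp add: card_insert_if)
  next
    case False
    then have "{x. (x, y) \<in> insert (a, b) M} = {x. (x, y) \<in> M}" by auto
    then show ?thesis using M that unfolding bmatching_def by auto
  qed
  ultimately show "bmatching A B E s (insert (a, b) M)"
    using M ab unfolding bmatching_def by auto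
  show "card M < card (insert (a, b) M)" using ab bmatching_finite[OF M fin] by simp
qed

lemma bmatching_swap:
  assumes M: "bmatching A B E s M" and fin: "finite A" "finite B"
    and old: "(a, b') \<in> M" and new: "b \<in> B" "E a b" "(a, b) \<notin> M"
    and deficient: "card {x. (x, b) \<in> M} < s"
  defines "M' \<equiv> insert (a, b) (M - {(a, b')})"
  shows "bmatching A B E s M'" "card M' = card M" "card {x. (x, b') \<in> M'} < s"
    and "card {y. (x, y) \<in> M'} \<le> card {y. (x, y) \<in> M}"
proof -
  have bb': "b' \<noteq> b" using old new by auto
  have fins: "finite M" "\<And>a. finite {y. (a, y) \<in> M}" "\<And>b. finite {x. (x, b) \<in> M}"
    using bmatching_finite[OF M fin] by auto
  show rows: "card {y. (x, y) \<in> M'} \<le> card {y. (x, y) \<in> M}" for x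
  proof (cases "x = a")
    case True
    then have "{y. (x, y) \<in> M'} = insert b ({y. (a, y) \<in> M} - {b'})" using bb' by (auto simp: M'_def)
    moreover have "0 < card {y. (a, y) \<in> M}" using old fins(2)[of a] card_gt_0_iff by blast
    ultimately show ?thesis using True old new fins(2)[of a] by (simp add: card_insert_if)
  next
    case False
    then have "{y. (x, y) \<in> M'} \<subseteq> {y. (x, y) \<in> M}" by (auto simp: M'_def)
    then show ?thesis using fins(2) by (rule card_mono[rotated])
  qed
  have cols: "card {x. (x, y) \<in> M'} \<le> s" if "y \<in> B" for y
  proof (cases "y = b")
    case True
    then have "{x. (x, y) \<in> M'} = insert a {x. (x, b) \<in> M}" using bb' by (auto simp: M'_def)
    then show ?thesis using deficient fins(3) by (simp add: card_insert_if)
  next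
    case False
    then have "{x. (x, y) \<in> M'} \<subseteq> {x. (x, y) \<in> M}" by (auto simp: M'_def)
    then have "card {x. (x, y) \<in> M'} \<le> card {x. (x, y) \<in> M}" using fins(3) by (rule card_mono[rotated])
    then show ?thesis using M that unfolding bmatching_def by auto
  qed
  have "M' \<subseteq> {(a, b). a \<in> A \<and> b \<in> B \<and> E a b}"
    using M old new unfolding bmatching_def M'_def by blast
  moreover have "\<forall>x\<in>A. card {y. (x, y) \<in> M'} \<le> s"
    using M rows le_trans unfolding bmatching_def by blast
  ultimately show "bmatching A B E s M'" using cols unfolding bmatching_def by blast
  have "0 < card M" using old fins(1) card_gt_0_iff by blast
  then show "card M' = card M" using old new fins(1) by (simp add: M'_def card_insert_if)
  have "{x. (x, b') \<in> M'} = {x. (x, b') \<in> M} - {a}" using bb' by (auto simp: M'_def)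
  moreover have "card {x. (x, b') \<in> M} \<le> s" using M old unfolding bmatching_def by auto
  ultimately show "card {x. (x, b') \<in> M'} < s" using card_Diff1_less[OF fins(3)[of b'], of a] old by simp
qed

inductive alt_reach :: "('a \<times> 'a) set \<Rightarrow> ('a \<Rightarrow> 'a \<Rightarrow> bool) \<Rightarrow> 'a \<Rightarrow> nat \<Rightarrow> 'a \<Rightarrow> bool"
  for M E a0 where
  alt_reach_start: "alt_reach M E a0 0 a0"
| alt_reach_step: "alt_reach M E a0 j a \<Longrightarrow> E a b \<Longrightarrow> (a, b) \<notin> M \<Longrightarrow> (a', b) \<in> M
    \<Longrightarrow> alt_reach M E a0 (Suc j) a'"

inductive_cases alt_reach_0E: "alt_reach M E a0 0 a"
inductive_cases alt_reach_SucE: "alt_reach M E a0 (Suc j) a'"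

lemma alt_reach_in_left:
  assumes "alt_reach M E a0 j a" "a0 \<in> A" "M \<subseteq> A \<times> B"
  shows "a \<in> A"
  using assms by (induction rule: alt_reach.induct) auto

lemma alt_reach_swap:
  assumes "alt_reach M E a0 i v" "i < k"
    and no_a: "\<forall>i<k. \<not> alt_reach M E a0 i a"
    and no_b: "\<forall>i<k. \<forall>x. alt_reach M E a0 i x \<longrightarrow> E x b \<longrightarrow> (x, b) \<in> M"
  shows "alt_reach (insert (a, b) (M - {(a, b')})) E a0 i v"
  using assms(1,2)
proof (induction rule: alt_reach.induct)
  case alt_reach_start
  show ?case by (rule alt_reach.alt_reach_start)
next
  case (alt_reach_step j x y v)
  have "j < k" using alt_reach_step.prems by simp
  then have "(x, y) \<noteq> (a, b)" using no_b alt_reach_step.hyps by blast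
  moreover have "alt_reach M E a0 (Suc j) v"
    using alt_reach_step.hyps(1-4) by (rule alt_reach.alt_reach_step)
  then have "v \<noteq> a" using no_a alt_reach_step.prems by blast
  ultimately show ?case
    using alt_reach_step by (auto intro: alt_reach.alt_reach_step)
qed

text \<open>Along a shortest alternating path to \<open>b\<close>, trading the last \<open>M\<close>-edge \<open>(a, b')\<close> for \<open>(a, b)\<close>
  keeps the earlier part of the path alternating and makes \<open>b'\<close> deficient, so induction on the
  length ends with an edge that can simply be added.\<close>

lemma bmatching_augment:
  assumes fin: "finite A" "finite B"
    and "bmatching A B E s M" "a0 \<in> A" "card {y. (a0, y) \<in> M} < s"
    and "b \<in> B" "card {x. (x, b) \<in> M} < s"
    and "alt_reach M E a0 k a" "E a b" "(a, b) \<notin> M"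
  shows "\<exists>M'. bmatching A B E s M' \<and> card M < card M'"
  using assms(3-)
proof (induction k arbitrary: M a b rule: less_induct)
  case (less k)
  note M = less.prems(1) and a0 = less.prems(2,3) and b = less.prems(4,5) and path = less.prems(6-8)
  show ?case
  proof (cases "\<exists>j<k. \<exists>x. alt_reach M E a0 j x \<and> E x b \<and> (x, b) \<notin> M")
    case True
    then obtain j x where "j < k" "alt_reach M E a0 j x" "E x b" "(x, b) \<notin> M" by blast
    then show ?thesis using less.IH[OF \<open>j < k\<close> M a0 b] by blast
  next
    case shortest: False
    show ?thesis
    proof (cases k)
      case 0
      then have "a = a0" using path(1) by (auto elim: alt_reach_0E)
      then have "E a0 b" "(a0, b) \<notin> M" using path(2,3) by auto
      then show ?thesis using bmatching_insert[OF M fin a0(1) b(1) _ _ a0(2) b(2)] by blast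
    next
      case (Suc j)
      then obtain a1 b' where a1: "alt_reach M E a0 j a1" "E a1 b'" "(a1, b') \<notin> M" "(a, b') \<in> M"
        using path(1) by (auto elim: alt_reach_SucE)
      define M' where "M' = insert (a, b) (M - {(a, b')})"
      note swap = bmatching_swap[OF M fin a1(4) b(1) path(2,3) b(2), folded M'_def]
      have no_a: "\<forall>i<k. \<not> alt_reach M E a0 i a" using shortest path(2,3) by blast
      have "alt_reach M' E a0 j a1"
        unfolding M'_def using alt_reach_swap[OF a1(1) _ no_a] shortest Suc by auto
      moreover have "(a1, b') \<notin> M'" using a1(3,4) path(3) by (auto simp: M'_def)
      moreover have "card {y. (a0, y) \<in> M'} < s" using le_less_trans[OF swap(4) a0(2)] .
      moreover have "b' \<in> B" using M a1(4) unfolding bmatching_def by auto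
      moreover have "j < k" using Suc by simp
      ultimately obtain M'' where "bmatching A B E s M''" "card M' < card M''"
        using less.IH[OF _ swap(1) a0(1) _ _ swap(3) _ a1(2)] by blast
      then show ?thesis using swap(2) by auto
    qed
  qed
qed

lemma bmatching_card_eq_sum:
  assumes M: "bmatching A B E s M" and fin: "finite A" "finite B"
  shows "card M = (\<Sum>a\<in>A. card {b. (a, b) \<in> M})" "card M = (\<Sum>b\<in>B. card {a. (a, b) \<in> M})"
proof -
  have sub: "M \<subseteq> A \<times> B" using M unfolding bmatching_def by auto
  then have "M = M \<inter> A \<times> B" "\<And>a. {b\<in>B. (a, b) \<in> M} = {b. (a, b) \<in> M}"
    "\<And>b. {a\<in>A. (a, b) \<in> M} = {a. (a, b) \<in> M}" by auto
  then show "card M = (\<Sum>a\<in>A. card {b. (a, b) \<in> M})" "card M = (\<Sum>b\<in>B. card {a. (a, b) \<in> M})"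
    using card_Int_Times_eq_sum_left[OF fin, of M] card_Int_Times_eq_sum_right[OF fin, of M] by simp_all
qed

lemma bmatching_deficient_left:
  assumes M: "bmatching A B E s M" and fin: "finite A" "finite B" and bal: "card A = card B"
    and not_perfect: "\<not> ((\<forall>a\<in>A. card {b. (a, b) \<in> M} = s) \<and> (\<forall>b\<in>B. card {a. (a, b) \<in> M} = s))"
  shows "\<exists>a\<in>A. card {b. (a, b) \<in> M} < s"
proof (rule ccontr)
  assume "\<not> ?thesis"
  then have full: "\<forall>a\<in>A. card {b. (a, b) \<in> M} = s" using M unfolding bmatching_def by force
  have cols: "\<forall>b\<in>B. card {a. (a, b) \<in> M} \<le> s" using M unfolding bmatching_def by blast
  then obtain b where "b \<in> B" "card {a. (a, b) \<in> M} < s" using not_perfect full by force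
  then have "(\<Sum>b\<in>B. card {a. (a, b) \<in> M}) < (\<Sum>b\<in>B. s)"
    using cols fin(2) by (intro sum_strict_mono_ex1) auto
  moreover have "(\<Sum>b\<in>B. card {a. (a, b) \<in> M}) = (\<Sum>a\<in>A. card {b. (a, b) \<in> M})"
    using bmatching_card_eq_sum[OF M fin] by simp
  ultimately show False using full bal by simp
qed

lemma bmatching_closed_set:
  assumes M: "bmatching A B E s M" and fin: "finite A" "finite B"
    and X: "X \<subseteq> A" "a0 \<in> X" "card {y. (a0, y) \<in> M} < s"
    and Y: "Y \<subseteq> B" "\<forall>b\<in>Y. card {x. (x, b) \<in> M} = s"
    and matched_into_X: "\<forall>x b. (x, b) \<in> M \<longrightarrow> b \<in> Y \<longrightarrow> x \<in> X"
    and unmatched_into_Y: "\<forall>x\<in>X. \<forall>b\<in>B - Y. E x b \<longrightarrow> (x, b) \<in> M"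
  shows "e_G E X (B - Y) + s * card Y < s * card X"
proof -
  have sub: "M \<subseteq> {(a, b). a \<in> A \<and> b \<in> B \<and> E a b}" using M unfolding bmatching_def by blast
  have finX: "finite X" using X(1) fin(1) finite_subset by blast
  have finY: "finite Y" using Y(1) fin(2) finite_subset by blast
  have "{(x, y). x \<in> X \<and> y \<in> B - Y \<and> E x y} = M \<inter> X \<times> (B - Y)"
    using sub unmatched_into_Y by auto
  then have out: "e_G E X (B - Y) = card (M \<inter> X \<times> (B - Y))" unfolding e_G_def by simp
  have "\<And>b. b \<in> Y \<Longrightarrow> {x\<in>X. (x, b) \<in> M} = {x. (x, b) \<in> M}" using matched_into_X by auto
  then have into: "card (M \<inter> X \<times> Y) = s * card Y"
    using card_Int_Times_eq_sum_right[OF finX finY, of M] Y(2) by simp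
  have "M \<inter> X \<times> B = (M \<inter> X \<times> Y) \<union> (M \<inter> X \<times> (B - Y))" using Y(1) by auto
  moreover have "card (M \<inter> X \<times> Y \<union> M \<inter> X \<times> (B - Y))
      = card (M \<inter> X \<times> Y) + card (M \<inter> X \<times> (B - Y))"
    using finX finY fin(2) by (intro card_Un_disjoint) auto
  ultimately have "card (M \<inter> X \<times> B) = s * card Y + e_G E X (B - Y)" using into out by simp
  moreover have "card (M \<inter> X \<times> B) < s * card X"
  proof -
    have "\<And>x. {y\<in>B. (x, y) \<in> M} = {y. (x, y) \<in> M}" using sub by auto
    then have "card (M \<inter> X \<times> B) = (\<Sum>x\<in>X. card {y. (x, y) \<in> M})"
      using card_Int_Times_eq_sum_left[OF finX fin(2), of M] by simp
    also have "\<dots> < (\<Sum>x\<in>X. s)"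
      using M X finX unfolding bmatching_def by (intro sum_strict_mono_ex1) auto
    finally show ?thesis by (simp add: mult.commute)
  qed
  ultimately show ?thesis by simp
qed

lemma bmatching_extend:
  assumes M: "bmatching A B E s M" and fin: "finite A" "finite B" and bal: "card A = card B"
    and cond: "\<And>X Y. X \<subseteq> A \<Longrightarrow> Y \<subseteq> B \<Longrightarrow> s * card X \<le> e_G E X Y + s * (card B - card Y)"
    and not_perfect: "\<not> ((\<forall>a\<in>A. card {b. (a, b) \<in> M} = s) \<and> (\<forall>b\<in>B. card {a. (a, b) \<in> M} = s))"
  shows "\<exists>M'. bmatching A B E s M' \<and> card M < card M'"
proof -
  obtain a0 where a0: "a0 \<in> A" "card {b. (a0, b) \<in> M} < s"
    using bmatching_deficient_left[OF M fin bal not_perfect] by blast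
  define X where "X = {a. \<exists>j. alt_reach M E a0 j a}"
  define Y where "Y = {b\<in>B. \<exists>a\<in>X. E a b \<and> (a, b) \<notin> M}"
  show ?thesis
  proof (cases "\<exists>b\<in>Y. card {a. (a, b) \<in> M} < s")
    case True
    then obtain b a j where "b \<in> B" "card {a. (a, b) \<in> M} < s" "alt_reach M E a0 j a" "E a b" "(a, b) \<notin> M"
      unfolding Y_def X_def by blast
    then show ?thesis using bmatching_augment[OF fin M a0] by blast
  next
    case False
    have "M \<subseteq> A \<times> B" using M unfolding bmatching_def by auto
    then have "X \<subseteq> A" unfolding X_def using alt_reach_in_left[OF _ a0(1)] by blast
    moreover have "a0 \<in> X" unfolding X_def using alt_reach_start[of M E a0] by blast
    moreover have "Y \<subseteq> B" unfolding Y_def by blast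
    moreover have "\<forall>b\<in>Y. card {x. (x, b) \<in> M} = s"
      using False M \<open>Y \<subseteq> B\<close> unfolding bmatching_def by (meson le_neq_implies_less subsetD)
    moreover have "\<forall>x b. (x, b) \<in> M \<longrightarrow> b \<in> Y \<longrightarrow> x \<in> X"
      unfolding X_def Y_def by (blast intro: alt_reach_step)
    moreover have "\<forall>x\<in>X. \<forall>b\<in>B - Y. E x b \<longrightarrow> (x, b) \<in> M" unfolding Y_def by blast
    ultimately have "e_G E X (B - Y) + s * card Y < s * card X"
      using bmatching_closed_set[OF M fin _ _ a0(2)] by blast
    moreover have "card B - card (B - Y) = card Y"
      using \<open>Y \<subseteq> B\<close> fin(2) by (simp add: card_Diff_subset card_mono finite_subset)
    ultimately show ?thesis using cond[OF \<open>X \<subseteq> A\<close>, of "B - Y"] by simp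
  qed
qed

lemma bmatching_perfect_exists:
  assumes fin: "finite A" "finite B" and bal: "card A = card B"
    and cond: "\<And>X Y. X \<subseteq> A \<Longrightarrow> Y \<subseteq> B \<Longrightarrow> s * card X \<le> e_G E X Y + s * (card B - card Y)"
  obtains M where "bmatching A B E s M"
    "\<forall>a\<in>A. card {b. (a, b) \<in> M} = s" "\<forall>b\<in>B. card {a. (a, b) \<in> M} = s"
proof -
  have "bmatching A B E s {}" unfolding bmatching_def by simp
  moreover have "card M < Suc (card (A \<times> B))" if "bmatching A B E s M" for M
    using that fin card_mono[of "A \<times> B" M] unfolding bmatching_def by fastforce
  ultimately obtain M where M: "bmatching A B E s M"
    and maximal: "\<forall>M'. bmatching A B E s M' \<longrightarrow> card M' \<le> card M"
    using Lattices_Big.ex_has_greatest_nat[of "bmatching A B E s" "{}" card] by blast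
  then show ?thesis
    using bmatching_extend[OF M fin bal cond] that by (meson not_le)
qed

lemma has_factor_of_bmatching:
  assumes G: "bipartite_graph A B E" and M: "bmatching A B E s M"
    and rows: "\<forall>a\<in>A. card {b. (a, b) \<in> M} = s" and cols: "\<forall>b\<in>B. card {a. (a, b) \<in> M} = s"
  shows "has_factor (A \<union> B) E s"
proof -
  have sub: "M \<subseteq> {(a, b). a \<in> A \<and> b \<in> B \<and> E a b}" using M unfolding bmatching_def by blast
  have disj: "A \<inter> B = {}" and sym: "\<forall>x y. E x y \<longrightarrow> E y x"
    using G unfolding bipartite_graph_def by auto
  define F where "F x y \<longleftrightarrow> (x, y) \<in> M \<or> (y, x) \<in> M" for x y
  have "{u. F v u} = {b. (v, b) \<in> M}" if "v \<in> A" for v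
    unfolding F_def using sub disj that by blast
  moreover have "{u. F v u} = {a. (a, v) \<in> M}" if "v \<in> B" for v
    unfolding F_def using sub disj that by blast
  ultimately have "\<forall>v\<in>A \<union> B. degree F v = s" using rows cols unfolding degree_def by auto
  moreover have "\<forall>x y. F x y \<longrightarrow> E x y" unfolding F_def using sub sym by blast
  moreover have "\<forall>x y. F x y \<longrightarrow> F y x" unfolding F_def by blast
  ultimately show ?thesis unfolding has_factor_def by blast
qed

theorem bipartite_factor_criterion:
  assumes G: "bipartite_graph A B E" and bal: "card A = card B"
    and cond: "\<And>X Y. X \<subseteq> A \<Longrightarrow> Y \<subseteq> B \<Longrightarrow> s * card X \<le> e_G E X Y + s * (card B - card Y)"
  shows "has_factor (A \<union> B) E s"
proof -
  have "finite A" "finite B" using G unfolding bipartite_graph_def by auto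
  then show ?thesis
    using bmatching_perfect_exists[OF _ _ bal cond] has_factor_of_bmatching[OF G] by metis
qed

section \<open>Verifying the criterion\<close>

lemma e_G_ge_small_side:
  fixes d c t :: real
  assumes G: "bipartite_graph A B E"
    and deg: "\<forall>v\<in>A. d \<le> real (degree E v)"
    and sparse: "\<forall>X Y. X \<subseteq> A \<and> Y \<subseteq> B \<and> X \<noteq> {} \<and> card X = card Y \<and> real (card X) \<le> t
                   \<longrightarrow> real (e_G E X Y) < c * real (card X)"
    and X: "X \<subseteq> A" "real (card X) \<le> t" "card X \<le> card B"
    and Y: "Y \<subseteq> B" "card B \<le> card X + card Y"
  shows "(d - c) * real (card X) \<le> real (e_G E X Y)"
proof (cases "X = {}")
  case True
  then show ?thesis by simp
next
  case False
  have fin: "finite X" "finite B" "finite Y"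
    using G X(1) Y(1) finite_subset unfolding bipartite_graph_def by blast+
  have "card (B - Y) \<le> card X" using Y fin by (simp add: card_Diff_subset)
  then obtain Y' where Y': "B - Y \<subseteq> Y'" "Y' \<subseteq> B" "card Y' = card X"
    using exists_subset_between[OF fin(2) Diff_subset _ X(3)] by blast
  have "e_G E X B = e_G E X Y + e_G E X (B - Y)"
    using e_G_Un_right[of X Y "B - Y" E] fin Y(1) by (simp add: Un_absorb1)
  also have "\<dots> \<le> e_G E X Y + e_G E X Y'"
    using e_G_mono_right[OF fin(1) finite_subset[OF Y'(2) fin(2)] Y'(1)] by simp
  finally have "real (e_G E X B) \<le> real (e_G E X Y) + real (e_G E X Y')" by linarith
  moreover have "real (e_G E X Y') < c * real (card X)" using sparse[rule_format, of X Y'] X Y' False by simp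
  moreover have "d * real (card X) \<le> real (e_G E X B)"
    using e_G_ge_min_degree[OF G X(1)] deg X(1) by blast
  ultimately show ?thesis by (simp add: left_diff_distrib)
qed

lemma e_G_ge_small_side_right:
  fixes d c t :: real
  assumes G: "bipartite_graph A B E"
    and deg: "\<forall>v\<in>B. d \<le> real (degree E v)"
    and sparse: "\<forall>X Y. X \<subseteq> A \<and> Y \<subseteq> B \<and> X \<noteq> {} \<and> card X = card Y \<and> real (card X) \<le> t
                   \<longrightarrow> real (e_G E X Y) < c * real (card X)"
    and Y: "Y \<subseteq> B" "real (card Y) \<le> t" "card Y \<le> card A"
    and X: "X \<subseteq> A" "card A \<le> card Y + card X"
  shows "(d - c) * real (card Y) \<le> real (e_G E X Y)"
proof -
  have sym: "\<forall>x y. E x y \<longrightarrow> E y x" and finB: "finite B"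
    using G unfolding bipartite_graph_def by auto
  have "\<forall>Y X. Y \<subseteq> B \<and> X \<subseteq> A \<and> Y \<noteq> {} \<and> card Y = card X \<and> real (card Y) \<le> t
          \<longrightarrow> real (e_G E Y X) < c * real (card Y)"
  proof (intro allI impI)
    fix Y' X' assume h: "Y' \<subseteq> B \<and> X' \<subseteq> A \<and> Y' \<noteq> {} \<and> card Y' = card X' \<and> real (card Y') \<le> t"
    moreover have "X' \<noteq> {}" using h finB finite_subset[of Y' B] by fastforce
    ultimately have "real (e_G E X' Y') < c * real (card Y')" using sparse[rule_format, of X' Y'] by auto
    then show "real (e_G E Y' X') < c * real (card Y')" by (subst e_G_commute[OF sym])
  qed
  from e_G_ge_small_side[OF bipartite_graph_swap[OF G] deg this Y X]
  show ?thesis by (subst (asm) e_G_commute[OF sym])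
qed

lemma dense_deficiency_bound:
  fixes s \<rho> x y m e :: real
  assumes "0 \<le> s" "s \<le> \<rho>" "0 \<le> x" "x \<le> m" "0 \<le> y" "y \<le> m" "0 < m"
    and "\<rho> * x * y \<le> m * e"
  shows "s * x \<le> e + s * (m - y)"
proof -
  have "m * (x + y - m) \<le> x * y"
    using mult_nonneg_nonneg[of "m - x" "m - y"] assms(4,6) by (simp add: algebra_simps)
  then have "s * (m * (x + y - m)) \<le> s * (x * y)" using assms(1) by (rule mult_left_mono)
  also have "\<dots> \<le> \<rho> * (x * y)" using assms(2,3,5) by (simp add: mult_right_mono)
  also have "\<dots> \<le> m * e" using assms(8) by (simp add: mult.assoc)
  finally have "m * (s * (x + y - m)) \<le> m * e" by (simp add: algebra_simps)
  then have "s * (x + y - m) \<le> e" using assms(7) by simp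
  then show ?thesis by (simp add: algebra_simps)
qed

lemma e_G_ge_min_side:
  fixes s d c t :: real
  assumes G: "bipartite_graph A B E" and bal: "card A = card B"
    and deg: "\<forall>v\<in>A \<union> B. d \<le> real (degree E v)"
    and sparse: "\<forall>X Y. X \<subseteq> A \<and> Y \<subseteq> B \<and> X \<noteq> {} \<and> card X = card Y \<and> real (card X) \<le> t
                   \<longrightarrow> real (e_G E X Y) < c * real (card X)"
    and s: "0 \<le> s" "s \<le> d - c"
    and XY: "X \<subseteq> A" "Y \<subseteq> B" "card B \<le> card X + card Y"
    and small: "real (min (card X) (card Y)) \<le> t"
  shows "s * real (min (card X) (card Y)) \<le> real (e_G E X Y)"
proof -
  have fin: "finite A" "finite B" using G unfolding bipartite_graph_def by auto
  have "card X \<le> card B" "card Y \<le> card A"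
    using card_mono[OF fin(1) XY(1)] card_mono[OF fin(2) XY(2)] bal by auto
  then have "(d - c) * real (min (card X) (card Y)) \<le> real (e_G E X Y)"
    using e_G_ge_small_side[OF G _ sparse XY(1) _ _ XY(2,3)]
      e_G_ge_small_side_right[OF G _ sparse XY(2) _ _ XY(1)] deg small bal XY(3)
    by (cases "card X \<le> card Y") (auto simp: min_def)
  moreover have "s * real (min (card X) (card Y)) \<le> (d - c) * real (min (card X) (card Y))"
    using s by (simp add: mult_right_mono)
  ultimately show ?thesis by linarith
qed

lemma e_G_ge_dense:
  fixes s \<rho> t :: real
  assumes G: "bipartite_graph A B E" and bal: "card A = card B"
    and dense: "\<forall>X Y. X \<subseteq> A \<and> Y \<subseteq> B \<and> real (card X + card Y) > real (card A + card B) / 2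
                   \<and> real (min (card X) (card Y)) > t
                  \<longrightarrow> real (e_G E X Y) \<ge> 2 * \<rho> * real (card X) * real (card Y) / real (card A + card B)"
    and s: "0 \<le> s" "s \<le> \<rho>"
    and XY: "X \<subseteq> A" "Y \<subseteq> B" "card B < card X + card Y" "real (min (card X) (card Y)) > t"
  shows "s * real (card X) \<le> real (e_G E X Y) + s * (real (card B) - real (card Y))"
proof -
  have fin: "finite A" "finite B" using G unfolding bipartite_graph_def by auto
  have xm: "card X \<le> card B" and ym: "card Y \<le> card B"
    using card_mono[OF fin(1) XY(1)] card_mono[OF fin(2) XY(2)] bal by auto
  have "2 * \<rho> * real (card X) * real (card Y) / real (2 * card B) \<le> real (e_G E X Y)"
    using dense XY bal by simp
  then have "\<rho> * real (card X) * real (card Y) \<le> real (card B) * real (e_G E X Y)"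
    using XY(3) xm ym by (simp add: pos_divide_le_eq mult.commute)
  then show ?thesis using dense_deficiency_bound[OF s] xm ym XY(3) by simp
qed

lemma deficiency_condition:
  fixes s :: nat and d c t \<rho> :: real
  assumes G: "bipartite_graph A B E" and bal: "card A = card B"
    and deg: "\<forall>v\<in>A \<union> B. d \<le> real (degree E v)"
    and sparse: "\<forall>X Y. X \<subseteq> A \<and> Y \<subseteq> B \<and> X \<noteq> {} \<and> card X = card Y \<and> real (card X) \<le> t
                   \<longrightarrow> real (e_G E X Y) < c * real (card X)"
    and dense: "\<forall>X Y. X \<subseteq> A \<and> Y \<subseteq> B \<and> real (card X + card Y) > real (card A + card B) / 2
                   \<and> real (min (card X) (card Y)) > t
                  \<longrightarrow> real (e_G E X Y) \<ge> 2 * \<rho> * real (card X) * real (card Y) / real (card A + card B)"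
    and s_dense: "real s \<le> \<rho>" and s_sparse: "real s \<le> d - c"
    and X: "X \<subseteq> A" and Y: "Y \<subseteq> B"
  shows "s * card X \<le> e_G E X Y + s * (card B - card Y)"
proof -
  have fin: "finite A" "finite B" using G unfolding bipartite_graph_def by auto
  have xm: "card X \<le> card B" and ym: "card Y \<le> card B"
    using card_mono[OF fin(1) X] card_mono[OF fin(2) Y] bal by auto
  consider "card X + card Y \<le> card B"
    | "card B < card X + card Y" "real (min (card X) (card Y)) \<le> t"
    | "card B < card X + card Y" "real (min (card X) (card Y)) > t"
    by linarith
  then have "real s * real (card X) \<le> real (e_G E X Y) + real s * (real (card B) - real (card Y))"
  proof cases
    case 1
    then have "real s * real (card X) \<le> real s * (real (card B) - real (card Y))"
      by (intro mult_left_mono) simp_all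
    then show ?thesis by simp
  next
    case 2
    have "real (card X) \<le> real (min (card X) (card Y)) + (real (card B) - real (card Y))"
      using xm ym by (simp add: min_def)
    then have "real s * real (card X)
        \<le> real s * real (min (card X) (card Y)) + real s * (real (card B) - real (card Y))"
      by (simp add: mult_left_mono flip: distrib_left)
    moreover have "real s * real (min (card X) (card Y)) \<le> real (e_G E X Y)"
      using 2 e_G_ge_min_side[OF G bal deg sparse _ s_sparse X Y] by simp
    ultimately show ?thesis by linarith
  next
    case 3
    then show ?thesis using e_G_ge_dense[OF G bal dense _ s_dense X Y] by simp
  qed
  then have "real (s * card X) \<le> real (e_G E X Y + s * (card B - card Y))"
    using ym by simp
  then show ?thesis by (simp only: of_nat_le_iff)
qed

theorem lemma2p10:
  fixes A B :: "'a set" and E :: "'a \<Rightarrow> 'a \<Rightarrow> bool"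
    and n :: nat and r \<phi> \<beta>1 \<beta>2 \<beta>3 \<gamma> :: real
  assumes G: "bipartite_graph A B E"
    and bal: "card A = card B" and n_def: "n = card A + card B"
    and r_pos: "r > 0" and phi_pos: "\<phi> > 0"
    and b1: "0 < \<beta>1" "\<beta>1 < 1" and b2: "0 < \<beta>2" "\<beta>2 < 1"
    and b3: "0 < \<beta>3" "\<beta>3 < 1" and g: "0 < \<gamma>" "\<gamma> < 1"
    and P1: "\<forall>v \<in> A \<union> B. real (degree E v) \<ge> r * (1 - \<beta>1)"
    and P2: "\<forall>X Y. X \<subseteq> A \<and> Y \<subseteq> B \<and> X \<noteq> {} \<and> card X = card Y \<and> real (card X) \<le> r / \<phi>
               \<longrightarrow> real (e_G E X Y) < r * \<beta>2 * real (card X)"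
    and P3: "\<forall>X Y. X \<subseteq> A \<and> Y \<subseteq> B \<and> real (card X + card Y) > real n / 2
               \<and> real (min (card X) (card Y)) > r / \<phi>
               \<longrightarrow> real (e_G E X Y) \<ge> 2 * r * (1 - \<beta>3) * real (card X) * real (card Y) / real n"
    and P4: "\<gamma> \<ge> max \<beta>3 (\<beta>1 + \<beta>2)"
  shows "has_factor (A \<union> B) E (nat \<lfloor>r * (1 - \<gamma>)\<rfloor>)"
proof -
  define s where "s = nat \<lfloor>r * (1 - \<gamma>)\<rfloor>"
  have "real s \<le> r * (1 - \<gamma>)" using r_pos g by (simp add: s_def)
  moreover have "r * (1 - \<gamma>) \<le> r * (1 - \<beta>3)" "r * (1 - \<gamma>) \<le> r * (1 - \<beta>1) - r * \<beta>2"
    using P4 r_pos mult_left_mono[of "\<beta>1 + \<beta>2" \<gamma> r] mult_left_mono[of \<beta>3 \<gamma> r]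
    by (auto simp: algebra_simps)
  ultimately have s_dense: "real s \<le> r * (1 - \<beta>3)" and s_sparse: "real s \<le> r * (1 - \<beta>1) - r * \<beta>2"
    by linarith+
  have dense: "\<forall>X Y. X \<subseteq> A \<and> Y \<subseteq> B \<and> real (card X + card Y) > real (card A + card B) / 2
                 \<and> real (min (card X) (card Y)) > r / \<phi>
                 \<longrightarrow> real (e_G E X Y) \<ge> 2 * (r * (1 - \<beta>3)) * real (card X) * real (card Y) / real (card A + card B)"
    using P3 n_def by (simp add: mult.assoc)
  have "s * card X \<le> e_G E X Y + s * (card B - card Y)" if "X \<subseteq> A" "Y \<subseteq> B" for X Y
    using deficiency_condition[OF G bal P1 P2 dense s_dense s_sparse that] .
  from bipartite_factor_criterion[OF G bal this] show ?thesis by (simp add: s_def)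
qed

end
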